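(* In the setting of the context, let $E(t)=\tilde E e^{-\delta t}+\tilde S e^{(\beta/\gamma)\tilde R}e^{-\delta t}\int_{\varphi^{-1}(t)}^{u_0}e^{\delta\varphi(v)}dv$ for $t\ge0$. Then $E(\infty):=\lim_{t\to\infty}E(t)=0$, $E(t)>0$ on $[0,\infty)$, and $E$ attains its maximum $\max_{t\ge0}E(t)$ at some $t=T_1\in\{T: E'(T)=0\}$, where for $T>0$ \[ E'(T)=\Bigl(\frac{\delta}{\beta}+\tilde S e^{(\beta/\gamma)\tilde R}\varphi^{-1}(T)\Bigr)\psi\bigl(\varphi^{-1}(T)\bigr)-\delta\Bigl(N-\tilde S e^{(\beta/\gamma)\tilde R}\varphi^{-1}(T)+\frac{\gamma}{\beta}\log\varphi^{-1}(T)\Bigr). \]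
   Context: Let $\beta,\gamma,\delta>0$ be constants and $\tilde S,\tilde E,\tilde I,\tilde R$ real numbers with $N:=\tilde S+\tilde E+\tilde I+\tilde R>0$. Standing assumptions: (A1) $\tilde I>0$; (A2) $\tilde E>(\gamma/\delta)\tilde I$; (A3) $\tilde S>\delta\tilde E/(\beta\tilde I)$; (A4) $\tilde R\ge 0$ and $N>\tilde S e^{(\beta/\gamma)\tilde R}+\tilde R$. Let $\alpha$ be the unique solution in $(\tilde R,N)$ of $x=N-\tilde S e^{(\beta/\gamma)\tilde R}e^{-(\beta/\gamma)x}$, and assume (A5) $\tilde S<(\gamma/\beta)e^{(\beta/\gamma)(\alpha-\tilde R)}$. Put $u_0:=e^{-(\beta/\gamma)\tilde R}$, $u_\infty:=e^{-(\beta/\gamma)\alpha}$. Let $\psi$ be the unique function, continuous and positive on $(u_\infty,u_0]$ and $C^1$ on $(u_\infty,u_0)$, satisfying $\psi'(u)\psi(u)-\frac{\gamma+\delta}{u}\psi(u)=-\delta\,\frac{\beta N-\beta\tilde S e^{(\beta/\gamma)\tilde R}u+\gamma\log u}{u}$ on $(u_\infty,u_0)$ and $\psi(u_0)=\beta\tilde I$. Let $\varphi(u):=\int_u^{u_0}\frac{d\xi}{\xi\psi(\xi)}$; $\varphi$ is a strictly decreasing continuous bijection from $(u_\infty,u_0]$ onto $[0,\infty)$, $C^1$ on $(u_\infty,u_0)$, with inverse $\varphi^{-1}:[0,\infty)\to(u_\infty,u_0]$. *)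

theory Defs
  imports "HOL-Analysis.Analysis"
begin

definition seir_phi :: "(real \<Rightarrow> real) \<Rightarrow> real \<Rightarrow> real \<Rightarrow> real" where
  "seir_phi \<psi> u0 u = integral {u..u0} (\<lambda>\<xi>. 1 / (\<xi> * \<psi> \<xi>))"

definition seir_phi_inv :: "(real \<Rightarrow> real) \<Rightarrow> real \<Rightarrow> real \<Rightarrow> real \<Rightarrow> real" where
  "seir_phi_inv \<psi> uinf u0 t = the_inv_into {uinf<..u0} (seir_phi \<psi> u0) t"

end

theory Submission
  imports Defs
begin

(* Put K = S exp((beta/gamma) R) and, for u in (u_inf, u0],
     exposed(u) = N - K u + (gamma/beta) ln u - psi(u)/beta,
   the exposed compartment N - S - I - R of the SEIR solution in the variable
   u = exp(-(beta/gamma) R(t)), where S = K u and I = psi(u)/beta.  The ODE for psi says exactly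
   that d/du (exp(delta phi(u)) exposed(u)) = -K exp(delta phi(u)); integrating from u to u0
   turns the formula for E(t) into E(t) = exposed(phi^-1(t)).  As d/dt phi^-1(t) = -u psi(u),
   the chain rule gives E' = beta S I - delta E, the stated E'(T).  As t -> oo, u = phi^-1(t)
   tends to u_inf, and 0 < E(t) <= N - K u + (gamma/beta) ln u -> 0 by the choice of alpha.
   Finally E'(0) = beta S I - delta E > 0 by (A3), so E rises above E(0) before decaying to 0
   and therefore attains its maximum at an interior critical point. *)

lemma integral_lower_has_real_derivative:
  fixes g :: "real \<Rightarrow> real"
  assumes "continuous_on {a..b} g" "a < x" "x < b"
  shows "((\<lambda>y. integral {y..b} g) has_real_derivative - g x) (at x)"
  using integral_has_real_derivative'[OF assms(1), of x] assms(2,3)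
  by (simp add: at_within_Icc_at)

lemma continuous_on_atLeast_if_Icc:
  fixes f :: "real \<Rightarrow> 'a::topological_space"
  assumes "\<And>b. continuous_on {a..b} f"
  shows "continuous_on {a..} f"
  unfolding continuous_on_eq_continuous_within
proof
  fix x assume x: "x \<in> {a..}"
  have "continuous (at x within {a..x + 1}) f"
    using assms[of "x + 1"] x by (simp add: continuous_on_eq_continuous_within)
  moreover have "{a..} \<inter> {..<x + 1} - {x} = {a..x + 1} \<inter> {..<x + 1} - {x}"
    by auto
  then have "at x within {a..} = at x within {a..x + 1}"
    by (intro at_within_nhd[where S = "{..<x + 1}"]) auto
  ultimately show "continuous (at x within {a..}) f"
    by (simp only:)
qed

lemma continuous_on_atLeast_attains_sup_if_tendsto_0:
  fixes f :: "real \<Rightarrow> real"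
  assumes cont: "continuous_on {a..} f" and lim: "(f \<longlongrightarrow> 0) at_top"
    and t0: "a \<le> t0" "0 < f t0"
  obtains T where "a \<le> T" "\<And>t. a \<le> t \<Longrightarrow> f t \<le> f T"
proof -
  obtain M where M: "\<And>t. M \<le> t \<Longrightarrow> f t < f t0"
    using order_tendstoD(2)[OF lim t0(2)] by (auto simp: eventually_at_top_linorder)
  define b where "b = max M t0"
  have "\<exists>T\<in>{a..b}. \<forall>t\<in>{a..b}. f t \<le> f T"
    by (rule continuous_attains_sup[OF compact_Icc])
      (use t0 in \<open>auto simp: b_def intro: continuous_on_subset[OF cont]\<close>)
  then obtain T where T: "T \<in> {a..b}" "\<And>t. t \<in> {a..b} \<Longrightarrow> f t \<le> f T"
    by blast
  have "f t \<le> f T" if "a \<le> t" for t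
  proof (cases "t \<le> b")
    case False
    then have "f t < f t0" by (intro M) (simp add: b_def)
    also have "f t0 \<le> f T" using T(2) t0 by (simp add: b_def)
    finally show ?thesis by simp
  qed (use T that in auto)
  with T(1) show ?thesis by (intro that) auto
qed

lemma interior_max_if_tendsto_0:
  fixes f f' :: "real \<Rightarrow> real"
  assumes cont: "continuous_on {0..} f"
    and deriv: "\<And>T. 0 < T \<Longrightarrow> (f has_real_derivative f' T) (at T)"
    and cont': "continuous_on {0..} f'" and "0 < f' 0"
    and "0 \<le> f 0" and lim: "(f \<longlongrightarrow> 0) at_top"
  shows "\<exists>T1>0. f' T1 = 0 \<and> (\<forall>t\<ge>0. f t \<le> f T1)"
proof -
  have "\<forall>\<^sub>F T in at 0 within {0..}. 0 < f' T"
    using cont' \<open>0 < f' 0\<close> unfolding continuous_on_eq_continuous_within continuous_within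
    by (intro order_tendstoD(1)) auto
  then obtain e where "0 < e" and e: "\<And>T. T \<in> {0..} \<Longrightarrow> T \<noteq> 0 \<Longrightarrow> dist T 0 < e \<Longrightarrow> 0 < f' T"
    unfolding eventually_at by blast
  define t0 where "t0 = e / 2"
  have "f 0 < f t0"
  proof (rule DERIV_pos_imp_increasing_open[of 0 t0 f])
    show "0 < t0" using \<open>0 < e\<close> by (simp add: t0_def)
    show "\<exists>y. (f has_real_derivative y) (at x) \<and> 0 < y" if "0 < x" "x < t0" for x
      using deriv[of x] e[of x] that by (auto simp: t0_def dist_real_def)
    show "continuous_on {0..t0} f" using cont by (rule continuous_on_subset) auto
  qed
  then obtain T1 where T1: "0 \<le> T1" "\<And>t. 0 \<le> t \<Longrightarrow> f t \<le> f T1"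
    using continuous_on_atLeast_attains_sup_if_tendsto_0[OF cont lim, of t0] \<open>0 < e\<close> \<open>0 \<le> f 0\<close>
    by (auto simp: t0_def)
  have "f 0 < f T1"
    using \<open>f 0 < f t0\<close> T1(2)[of t0] \<open>0 < e\<close> by (simp add: t0_def)
  then have "0 < T1"
    using T1(1) by (cases "T1 = 0") auto
  moreover have "f' T1 = 0"
    using T1(2) by (intro DERIV_local_max[OF deriv[OF \<open>0 < T1\<close>] \<open>0 < T1\<close>]) auto
  ultimately show ?thesis using T1(2) by blast
qed

locale seir_phi_inverse =
  fixes \<psi> :: "real \<Rightarrow> real" and uinf u0 :: real
  assumes uinf_pos: "0 < uinf"
    and psi_cont: "continuous_on {uinf<..u0} \<psi>"
    and psi_pos: "\<And>u. u \<in> {uinf<..u0} \<Longrightarrow> 0 < \<psi> u"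
    and phi_bij: "bij_betw (seir_phi \<psi> u0) {uinf<..u0} {0..}"
begin

abbreviation "phi \<equiv> seir_phi \<psi> u0"
abbreviation "phi_inv \<equiv> seir_phi_inv \<psi> uinf u0"

lemma uinf_less_u0: "uinf < u0"
proof (rule ccontr)
  assume "\<not> uinf < u0"
  then have "phi ` {uinf<..u0} = {}" by simp
  with phi_bij show False by (simp add: bij_betw_def)
qed

lemma continuous_on_phi_integrand: "continuous_on {uinf<..u0} (\<lambda>\<xi>. 1 / (\<xi> * \<psi> \<xi>))"
  using psi_pos uinf_pos by (intro continuous_intros psi_cont) (auto dest!: psi_pos)

lemma phi_has_real_derivative:
  assumes "uinf < u" "u < u0"
  shows "(phi has_real_derivative - 1 / (u * \<psi> u)) (at u)"
proof -
  have "continuous_on {(uinf + u) / 2..u0} (\<lambda>\<xi>. 1 / (\<xi> * \<psi> \<xi>))"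
    using assms by (intro continuous_on_subset[OF continuous_on_phi_integrand]) auto
  from integral_lower_has_real_derivative[OF this, of u] assms show ?thesis
    by (simp add: seir_phi_def[abs_def])
qed

lemma continuous_on_phi: "uinf < a \<Longrightarrow> continuous_on {a..u0} phi"
  unfolding seir_phi_def
  by (intro indefinite_integral_continuous_1' integrable_continuous_real
      continuous_on_subset[OF continuous_on_phi_integrand]) auto

lemma phi_strict_antimono:
  assumes "uinf < u" "u < v" "v \<le> u0"
  shows "phi v < phi u"
proof (rule DERIV_neg_imp_decreasing_open[of u v phi])
  show "\<exists>y. (phi has_real_derivative y) (at x) \<and> y < 0" if "u < x" "x < v" for x
    using that assms phi_has_real_derivative[of x] psi_pos[of x] uinf_pos by force
qed (use assms continuous_on_phi[of u] in \<open>auto intro: continuous_on_subset\<close>)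

lemma phi_u0 [simp]: "phi u0 = 0"
  by (simp add: seir_phi_def)

lemma phi_inv_mem: "0 \<le> t \<Longrightarrow> phi_inv t \<in> {uinf<..u0}"
  unfolding seir_phi_inv_def using bij_betwE[OF bij_betw_the_inv_into[OF phi_bij]] by simp

lemma phi_phi_inv: "0 \<le> t \<Longrightarrow> phi (phi_inv t) = t"
  unfolding seir_phi_inv_def by (rule f_the_inv_into_f_bij_betw[OF phi_bij]) simp

lemma phi_inv_phi: "u \<in> {uinf<..u0} \<Longrightarrow> phi_inv (phi u) = u"
  unfolding seir_phi_inv_def by (rule the_inv_into_f_f[OF bij_betw_imp_inj_on[OF phi_bij]])

lemma phi_inv_0 [simp]: "phi_inv 0 = u0"
  using phi_inv_phi[of u0] uinf_less_u0 by simp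

lemma phi_inv_strict_antimono:
  assumes "0 \<le> s" "s < t"
  shows "phi_inv t < phi_inv s"
proof (rule ccontr)
  assume "\<not> phi_inv t < phi_inv s"
  then consider "phi_inv s = phi_inv t" | "phi_inv s < phi_inv t" by fastforce
  then have "phi (phi_inv t) \<le> phi (phi_inv s)"
    by cases (use assms phi_inv_mem[of s] phi_inv_mem[of t] in \<open>auto intro: less_imp_le phi_strict_antimono\<close>)
  with assms show False by (simp add: phi_phi_inv)
qed

lemma continuous_on_phi_inv: "continuous_on {0..} phi_inv"
proof (rule continuous_on_atLeast_if_Icc)
  fix b :: real
  show "continuous_on {0..b} phi_inv"
  proof (cases "0 \<le> b")
    case True
    define a where "a = phi_inv b"
    have a: "uinf < a" "a \<le> u0" using phi_inv_mem[OF True] by (auto simp: a_def)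
    have "continuous_on (phi ` {a..u0}) phi_inv"
      using a by (intro continuous_on_inv continuous_on_phi) (auto intro!: phi_inv_phi)
    moreover have "{0..b} \<subseteq> phi ` {a..u0}"
    proof
      fix t assume t: "t \<in> {0..b}"
      have "a \<le> phi_inv t" "phi_inv t \<le> u0"
        using t phi_inv_mem[of t] phi_inv_strict_antimono[of t b] by (cases "t = b", auto simp: a_def)
      then show "t \<in> phi ` {a..u0}" using t phi_phi_inv[of t] by force
    qed
    ultimately show ?thesis by (rule continuous_on_subset)
  qed simp
qed

lemma phi_inv_has_real_derivative:
  assumes "0 < T"
  shows "(phi_inv has_real_derivative - phi_inv T * \<psi> (phi_inv T)) (at T)"
proof -
  let ?u = "phi_inv T"
  have u: "uinf < ?u" "?u < u0" "0 < \<psi> ?u"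
    using assms phi_inv_mem[of T] phi_inv_strict_antimono[of 0 T] psi_pos[of ?u] by auto
  have cont: "isCont phi_inv T"
    using assms by (intro continuous_on_interior[OF continuous_on_phi_inv]) auto
  have "(phi_inv has_real_derivative inverse (- 1 / (?u * \<psi> ?u))) (at T)"
    by (rule DERIV_inverse_function[where g = phi_inv and x = T and a = 0 and b = "T + 1",
          OF phi_has_real_derivative[OF u(1,2)]])
      (use u uinf_pos assms phi_phi_inv cont in auto)
  then show ?thesis by simp
qed

lemma phi_inv_tendsto: "(phi_inv \<longlongrightarrow> uinf) at_top"
proof (rule order_tendstoI)
  fix a assume "a < uinf"
  show "\<forall>\<^sub>F t in at_top. a < phi_inv t"
    using eventually_ge_at_top[of 0] by eventually_elim (use \<open>a < uinf\<close> phi_inv_mem in force)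
next
  fix a assume "uinf < a"
  define b where "b = min a u0"
  have b: "b \<in> {uinf<..u0}" using \<open>uinf < a\<close> uinf_less_u0 by (auto simp: b_def)
  have "0 \<le> phi b" using bij_betwE[OF phi_bij] b by auto
  show "\<forall>\<^sub>F t in at_top. phi_inv t < a"
    using eventually_gt_at_top[of "phi b"]
  proof eventually_elim
    case (elim t)
    then have "phi_inv t < phi_inv (phi b)"
      using \<open>0 \<le> phi b\<close> by (intro phi_inv_strict_antimono)
    then show ?case using phi_inv_phi[OF b] by (simp add: b_def)
  qed
qed

end

locale seir_exposed = seir_phi_inverse +
  fixes \<beta> \<gamma> \<delta> N K E :: real and \<psi>' :: "real \<Rightarrow> real"
  assumes beta_pos: "0 < \<beta>" and K_nonneg: "0 \<le> K" and E_pos: "0 < E"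
    and psi_deriv: "\<And>u. u \<in> {uinf<..<u0} \<Longrightarrow> (\<psi> has_real_derivative \<psi>' u) (at u)"
    and psi_ode: "\<And>u. u \<in> {uinf<..<u0} \<Longrightarrow>
      \<psi>' u * \<psi> u - ((\<gamma> + \<delta>) / u) * \<psi> u = - \<delta> * ((\<beta> * N - \<beta> * K * u + \<gamma> * ln u) / u)"
    and E_init: "N - K * u0 + \<gamma> / \<beta> * ln u0 - \<psi> u0 / \<beta> = E"
begin

definition exposed :: "real \<Rightarrow> real" where
  "exposed u = N - K * u + \<gamma> / \<beta> * ln u - \<psi> u / \<beta>"

definition exposure_rate :: "real \<Rightarrow> real" where
  "exposure_rate u = K * u * \<psi> u - \<delta> * exposed u"

definition E_curve :: "real \<Rightarrow> real" where
  "E_curve t = E * exp (- \<delta> * t)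
     + K * exp (- \<delta> * t) * integral {phi_inv t..u0} (\<lambda>v. exp (\<delta> * phi v))"

lemma exposed_u0 [simp]: "exposed u0 = E"
  using E_init by (simp add: exposed_def)

lemma continuous_on_exposed: "continuous_on {uinf<..u0} exposed"
  unfolding exposed_def[abs_def] using uinf_pos beta_pos
  by (intro continuous_intros psi_cont) auto

lemma continuous_on_exposure_rate: "continuous_on {uinf<..u0} exposure_rate"
  unfolding exposure_rate_def[abs_def]
  by (intro continuous_intros psi_cont continuous_on_exposed)

lemma exposed_has_real_derivative:
  assumes u: "uinf < u" "u < u0"
  shows "(exposed has_real_derivative - exposure_rate u / (u * \<psi> u)) (at u)"
proof -
  have "0 < u" "0 < \<psi> u" using u uinf_pos psi_pos[of u] by auto
  have ode: "u * \<psi>' u * \<psi> u = (\<gamma> + \<delta>) * \<psi> u - \<delta> * (\<beta> * N - \<beta> * K * u + \<gamma> * ln u)"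
    using psi_ode[of u] u \<open>0 < u\<close> by (simp add: field_simps)
  have "(exposed has_real_derivative - K + \<gamma> / \<beta> * (1 / u) - \<psi>' u / \<beta>) (at u)"
    unfolding exposed_def[abs_def] using u \<open>0 < u\<close> beta_pos
    by (auto intro!: derivative_eq_intros psi_deriv simp: field_simps)
  moreover have "- K + \<gamma> / \<beta> * (1 / u) - \<psi>' u / \<beta>
      = (\<gamma> * \<psi> u - u * \<psi>' u * \<psi> u - \<beta> * K * u * \<psi> u) / (\<beta> * u * \<psi> u)"
    using \<open>0 < u\<close> \<open>0 < \<psi> u\<close> beta_pos by (simp add: field_simps)
  also have "\<dots> = - exposure_rate u / (u * \<psi> u)"
    unfolding ode using \<open>0 < u\<close> \<open>0 < \<psi> u\<close> beta_pos
    by (simp add: exposure_rate_def exposed_def field_simps)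
  ultimately show ?thesis by simp
qed

lemma exp_phi_exposed_eq:
  assumes u: "u \<in> {uinf<..u0}"
  shows "exp (\<delta> * phi u) * exposed u = E + K * integral {u..u0} (\<lambda>v. exp (\<delta> * phi v))"
proof (cases "u = u0")
  case False
  define F where "F v = exp (\<delta> * phi v) * exposed v - K * integral {v..u0} (\<lambda>v. exp (\<delta> * phi v))"
    for v
  have u': "uinf < u" "u < u0" using u False by auto
  have cont_phi: "continuous_on {u..u0} phi" using continuous_on_phi u' by simp
  have "F u0 = F u"
  proof (rule DERIV_isconst_end[OF u'(2)])
    show "continuous_on {u..u0} F"
      unfolding F_def using u' cont_phi
      by (intro continuous_intros indefinite_integral_continuous_1' integrable_continuous_real
          continuous_on_subset[OF continuous_on_exposed]) auto
    fix x assume x: "u < x" "x < u0"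
    then have "0 < x" "0 < \<psi> x" using u' uinf_pos psi_pos[of x] by auto
    have "(phi has_real_derivative - 1 / (x * \<psi> x)) (at x)"
      using x u' by (intro phi_has_real_derivative) auto
    moreover have "(exposed has_real_derivative - exposure_rate x / (x * \<psi> x)) (at x)"
      using x u' by (intro exposed_has_real_derivative) auto
    moreover have "((\<lambda>v. integral {v..u0} (\<lambda>v. exp (\<delta> * phi v))) has_real_derivative
        - exp (\<delta> * phi x)) (at x)"
      using x cont_phi by (intro integral_lower_has_real_derivative continuous_intros) auto
    ultimately show "(F has_real_derivative 0) (at x)"
      unfolding F_def[abs_def] using \<open>0 < x\<close> \<open>0 < \<psi> x\<close>
      by (auto intro!: derivative_eq_intros simp: exposure_rate_def field_simps)
  qed
  then show ?thesis by (simp add: F_def)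
qed simp

lemma E_curve_eq_exposed:
  assumes "0 \<le> t"
  shows "E_curve t = exposed (phi_inv t)"
proof -
  have "E_curve t = exp (- \<delta> * t) * (exp (\<delta> * phi (phi_inv t)) * exposed (phi_inv t))"
    using exp_phi_exposed_eq[OF phi_inv_mem[OF assms]] by (simp add: E_curve_def algebra_simps)
  also have "\<dots> = exposed (phi_inv t)"
    using assms by (simp add: phi_phi_inv exp_minus field_simps)
  finally show ?thesis .
qed

lemma E_curve_has_real_derivative:
  assumes "0 < T"
  shows "(E_curve has_real_derivative exposure_rate (phi_inv T)) (at T)"
proof -
  let ?u = "phi_inv T"
  have u: "uinf < ?u" "?u < u0" "0 < ?u" "0 < \<psi> ?u"
    using assms phi_inv_mem[of T] phi_inv_strict_antimono[of 0 T] psi_pos[of ?u] uinf_pos by auto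
  have "((\<lambda>t. exposed (phi_inv t)) has_real_derivative
      - exposure_rate ?u / (?u * \<psi> ?u) * (- ?u * \<psi> ?u)) (at T)"
    by (rule DERIV_chain2[OF exposed_has_real_derivative[OF u(1,2)] phi_inv_has_real_derivative[OF assms]])
  then have "((\<lambda>t. exposed (phi_inv t)) has_real_derivative exposure_rate ?u) (at T)"
    using u(3,4) by simp
  then show ?thesis
    by (rule has_field_derivative_transform_within_open[of _ _ _ "{0<..}"])
      (use assms E_curve_eq_exposed in auto)
qed

lemma continuous_on_E_curve: "continuous_on {0..} E_curve"
proof -
  have "continuous_on {0..} (\<lambda>t. exposed (phi_inv t))"
    using phi_inv_mem
    by (intro continuous_on_compose2[OF continuous_on_exposed continuous_on_phi_inv]) auto
  then show ?thesis
    by (rule continuous_on_cong[THEN iffD1, rotated 2]) (auto simp: E_curve_eq_exposed)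
qed

lemma continuous_on_exposure_rate_phi_inv: "continuous_on {0..} (\<lambda>t. exposure_rate (phi_inv t))"
  using phi_inv_mem
  by (intro continuous_on_compose2[OF continuous_on_exposure_rate continuous_on_phi_inv]) auto

lemma E_curve_pos:
  assumes "0 \<le> t"
  shows "0 < E_curve t"
proof -
  have "0 \<le> integral {phi_inv t..u0} (\<lambda>v. exp (\<delta> * phi v))"
    using phi_inv_mem[OF assms]
    by (intro integral_nonneg integrable_continuous_real continuous_intros continuous_on_phi) auto
  then show ?thesis
    using E_pos K_nonneg by (simp add: E_curve_def add_pos_nonneg)
qed

lemma E_curve_tendsto_0:
  assumes "N - K * uinf + \<gamma> / \<beta> * ln uinf = 0"
  shows "(E_curve \<longlongrightarrow> 0) at_top"
proof (rule tendsto_sandwich)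
  let ?h = "\<lambda>u. N - K * u + \<gamma> / \<beta> * ln u"
  show "\<forall>\<^sub>F t in at_top. 0 \<le> E_curve t"
    using eventually_ge_at_top[of 0] by eventually_elim (simp add: E_curve_pos less_imp_le)
  show "\<forall>\<^sub>F t in at_top. E_curve t \<le> ?h (phi_inv t)"
    using eventually_ge_at_top[of 0]
  proof eventually_elim
    case (elim t)
    then show ?case
      using psi_pos[OF phi_inv_mem[OF elim]] beta_pos by (simp add: E_curve_eq_exposed exposed_def)
  qed
  have "isCont ?h uinf"
    using uinf_pos by (intro continuous_intros) auto
  then show "((\<lambda>t. ?h (phi_inv t)) \<longlongrightarrow> 0) at_top"
    using isCont_tendsto_compose[OF _ phi_inv_tendsto] assms by fastforce
qed simp

end

theorem theorem9:
  fixes \<beta> \<gamma> \<delta> S E I R N \<alpha> u0 uinf :: real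
    and \<psi> \<psi>' :: "real \<Rightarrow> real"
    and Ef Ed :: "real \<Rightarrow> real"
  assumes pos: "\<beta> > 0" "\<gamma> > 0" "\<delta> > 0"
    and N_def: "N = S + E + I + R" and N_pos: "N > 0"
    and A1: "I > 0"
    and A2: "E > (\<gamma> / \<delta>) * I"
    and A3: "S > \<delta> * E / (\<beta> * I)"
    and A4: "R \<ge> 0" "N > S * exp ((\<beta> / \<gamma>) * R) + R"
    and alpha: "\<alpha> \<in> {R<..<N}"
      "\<alpha> = N - S * exp ((\<beta> / \<gamma>) * R) * exp (- (\<beta> / \<gamma>) * \<alpha>)"
    and A5: "S < (\<gamma> / \<beta>) * exp ((\<beta> / \<gamma>) * (\<alpha> - R))"
    and u0_def: "u0 = exp (- (\<beta> / \<gamma>) * R)"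
    and uinf_def: "uinf = exp (- (\<beta> / \<gamma>) * \<alpha>)"
    and psi_cont: "continuous_on {uinf<..u0} \<psi>"
    and psi_pos: "\<And>u. u \<in> {uinf<..u0} \<Longrightarrow> \<psi> u > 0"
    and psi_deriv: "\<And>u. u \<in> {uinf<..<u0} \<Longrightarrow> (\<psi> has_real_derivative \<psi>' u) (at u)"
    and psi'_cont: "continuous_on {uinf<..<u0} \<psi>'"
    and psi_ode: "\<And>u. u \<in> {uinf<..<u0} \<Longrightarrow>
        \<psi>' u * \<psi> u - ((\<gamma> + \<delta>) / u) * \<psi> u
          = - \<delta> * ((\<beta> * N - \<beta> * S * exp ((\<beta> / \<gamma>) * R) * u + \<gamma> * ln u) / u)"
    and psi_init: "\<psi> u0 = \<beta> * I"
    and phi_bij: "bij_betw (seir_phi \<psi> u0) {uinf<..u0} {0..}"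
    and Ef_def: "\<And>t. Ef t = E * exp (- \<delta> * t)
        + S * exp ((\<beta> / \<gamma>) * R) * exp (- \<delta> * t)
          * integral {seir_phi_inv \<psi> uinf u0 t..u0} (\<lambda>v. exp (\<delta> * seir_phi \<psi> u0 v))"
    and Ed_def: "\<And>T. Ed T =
        (\<delta> / \<beta> + S * exp ((\<beta> / \<gamma>) * R) * seir_phi_inv \<psi> uinf u0 T)
          * \<psi> (seir_phi_inv \<psi> uinf u0 T)
        - \<delta> * (N - S * exp ((\<beta> / \<gamma>) * R) * seir_phi_inv \<psi> uinf u0 T
                 + (\<gamma> / \<beta>) * ln (seir_phi_inv \<psi> uinf u0 T))"
  shows "(Ef \<longlongrightarrow> 0) at_top
    \<and> (\<forall>t\<ge>0. Ef t > 0)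
    \<and> (\<forall>T>0. (Ef has_real_derivative Ed T) (at T))
    \<and> (\<exists>T1>0. Ed T1 = 0 \<and> (\<forall>t\<ge>0. Ef t \<le> Ef T1))"
proof -
  define K where "K = S * exp ((\<beta> / \<gamma>) * R)"
  have "0 < E" using A1 A2 pos by (meson divide_pos_pos mult_pos_pos less_trans)
  moreover have "0 < S" using A1 A3 pos \<open>0 < E\<close> by (meson divide_pos_pos mult_pos_pos less_trans)
  moreover have K_u0: "K * u0 = S" by (simp add: K_def u0_def mult.assoc exp_add[symmetric])
  moreover have "\<gamma> / \<beta> * ln u0 = - R" using pos by (simp add: u0_def)
  ultimately interpret seir_exposed \<psi> uinf u0 \<beta> \<gamma> \<delta> N K E \<psi>'
    using pos psi_cont psi_pos phi_bij psi_deriv psi_ode psi_init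
    by unfold_locales (auto simp: uinf_def K_def N_def ac_simps)
  have "Ef = E_curve" by (rule ext) (simp add: Ef_def[folded K_def] E_curve_def)
  moreover have "Ed = (\<lambda>T. exposure_rate (phi_inv T))"
    using pos by (intro ext) (simp add: Ed_def[folded K_def] exposure_rate_def exposed_def field_simps)
  moreover have "0 < exposure_rate (phi_inv 0)"
    using A1 A3 pos by (simp add: exposure_rate_def K_u0 psi_init pos_divide_less_eq mult_ac)
  moreover have "N - K * uinf + \<gamma> / \<beta> * ln uinf = 0"
    using alpha(2) pos by (simp add: K_def uinf_def)
  ultimately show ?thesis
    using interior_max_if_tendsto_0[OF continuous_on_E_curve E_curve_has_real_derivative
        continuous_on_exposure_rate_phi_inv] E_curve_pos E_curve_tendsto_0 E_curve_has_real_derivative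
    by (auto simp: less_imp_le)
qed

end
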